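(* Let $p$ be an odd prime, $q$ a power of $p$, and $n$ a nonnegative even integer with $p\nmid n$. If $F_n(1,x)$ is a permutation polynomial of $\mathbb{F}_q$, then $n\equiv 0\pmod 4$ and $\gcd\!\left(\lfloor\frac{n-1}{2}\rfloor,\,q-1\right)=1$.
   Context: For an integer $n\ge 1$, the $n$-th reversed Dickson polynomial of the third kind is $F_n(a,x)=\sum_{i=0}^{\lfloor n/2\rfloor}\frac{n-2i}{n-i}\binom{n-i}{i}(-x)^i a^{n-2i}$, where each coefficient $\frac{n-2i}{n-i}\binom{n-i}{i}$ is an integer (read in $\mathbb{F}_q$), and $F_0(a,x)=0$. A polynomial $f\in\mathbb{F}_q[x]$ is a permutation polynomial of $\mathbb{F}_q$ if $c\mapsto f(c)$ is a bijection of $\mathbb{F}_q$. *)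

theory Defs
  imports "HOL-Computational_Algebra.Polynomial" "HOL-Computational_Algebra.Primes"
begin

text \<open>Integer coefficient ((n-2i)/(n-i)) * binom(n-i, i) of the reversed Dickson
  polynomial of the third kind (exact division, valid for n \<ge> 1, 2i \<le> n).\<close>
definition rd3_coeff :: "nat \<Rightarrow> nat \<Rightarrow> nat" where
  "rd3_coeff n i = ((n - 2 * i) * ((n - i) choose i)) div (n - i)"

definition rev_dickson3 :: "nat \<Rightarrow> 'a::comm_ring_1 \<Rightarrow> 'a poly" where
  "rev_dickson3 n a =
     (if n = 0 then 0
      else (\<Sum>i\<le>n div 2. smult (of_nat (rd3_coeff n i) * a ^ (n - 2 * i)) ([:0, -1:] ^ i)))"

definition permutation_poly :: "'a::{comm_semiring_0,finite} poly \<Rightarrow> bool" where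
  "permutation_poly f \<longleftrightarrow> bij (poly f)"

end

theory Submission
  imports Defs
begin

text \<open>
  For \<open>n \<ge> 1\<close> the value \<open>F\<^sub>n(1,x)\<close> is the diagonal binomial sum
  \<open>E\<^sub>n\<^sub>-\<^sub>1(x) = \<Sum>\<^sub>i C(n-1-i, i) (-x)\<^sup>i\<close>, which satisfies \<open>E\<^sub>k\<^sub>+\<^sub>2 = E\<^sub>k\<^sub>+\<^sub>1 - x E\<^sub>k\<close>.
  Substituting \<open>x = (1 - w)/4\<close> gives \<open>2\<^sup>n\<^sup>-\<^sup>1 F\<^sub>n(1,x) = b\<^sub>n(w)\<close>, where
  \<open>(1 + \<surd>w)\<^sup>n = a\<^sub>n(w) + b\<^sub>n(w) \<surd>w\<close>; so \<open>F\<^sub>n(1,-)\<close> is a permutation iff \<open>b\<^sub>n\<close> is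
  injective. For \<open>n = 2m\<close> the polynomial \<open>b\<^sub>n\<close> is self-reciprocal up to a factor:
  \<open>w\<^sup>m b\<^sub>n(1/w) = w b\<^sub>n(w)\<close>. Hence if \<open>b\<^sub>n(w) = 0\<close>, or if \<open>w\<^sup>m\<^sup>-\<^sup>1 = 1\<close>, injectivity
  forces \<open>w = 1/w\<close>, i.e. \<open>w = \<plusminus>1\<close>. Since \<open>b\<^sub>n(0) = n\<close> and \<open>b\<^sub>n(1) = 2\<^sup>n\<^sup>-\<^sup>1\<close> are nonzero,
  the root of \<open>b\<^sub>n\<close> is \<open>-1\<close>, and \<open>b\<^sub>n(-1) \<noteq> 0\<close> for \<open>n \<equiv> 2 (mod 4)\<close>. A common divisor
  \<open>d > 1\<close> of \<open>m - 1\<close> and \<open>q - 1\<close> would give a \<open>d\<close>-th root of unity \<open>w \<noteq> 1\<close>, which must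
  then be \<open>-1\<close>, impossible as \<open>d\<close> is odd.
\<close>

definition diag_binomial_sum :: "nat \<Rightarrow> 'a::comm_ring_1 \<Rightarrow> 'a" where
  "diag_binomial_sum k x = (\<Sum>i\<le>k. of_nat ((k - i) choose i) * (-x) ^ i)"

lemma diag_binomial_sum_Suc_Suc:
  "diag_binomial_sum (Suc (Suc k)) x = diag_binomial_sum (Suc k) x - x * diag_binomial_sum k x"
proof -
  have pascal: "of_nat ((Suc (Suc k) - Suc j) choose Suc j) * (-x) ^ Suc j
      = of_nat ((k - j) choose j) * (-x) ^ Suc j + of_nat ((k - j) choose Suc j) * (-x) ^ Suc j"
    for j :: nat
  proof (cases "j \<le> k")
    case True
    then have "Suc (Suc k) - Suc j = Suc (k - j)" by simp
    then show ?thesis by (simp add: distrib_right)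
  next
    case False
    then show ?thesis by (cases j) auto
  qed
  have "diag_binomial_sum (Suc (Suc k)) x
      = 1 + (\<Sum>j\<le>Suc k. of_nat ((Suc (Suc k) - Suc j) choose Suc j) * (-x) ^ Suc j)"
    unfolding diag_binomial_sum_def by (subst sum.atMost_Suc_shift) simp
  also have "\<dots> = 1 + (\<Sum>j\<le>Suc k. of_nat ((k - j) choose j) * (-x) ^ Suc j)
       + (\<Sum>j\<le>Suc k. of_nat ((k - j) choose Suc j) * (-x) ^ Suc j)"
    unfolding pascal sum.distrib by (simp only: add.assoc)
  moreover have "(\<Sum>j\<le>Suc k. of_nat ((k - j) choose j) * (-x) ^ Suc j) = - x * diag_binomial_sum k x"
    unfolding diag_binomial_sum_def by (simp add: sum_distrib_left mult_ac)
  moreover have "1 + (\<Sum>j\<le>Suc k. of_nat ((k - j) choose Suc j) * (-x) ^ Suc j)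
      = diag_binomial_sum (Suc k) x"
    unfolding diag_binomial_sum_def by (subst (2) sum.atMost_Suc_shift) simp
  ultimately show ?thesis by (simp add: algebra_simps)
qed

lemma rd3_coeff_eq_choose:
  assumes "n \<ge> 1" "i \<le> n div 2"
  shows "rd3_coeff n i = (n - 1 - i) choose i"
proof -
  define a where "a = n - i"
  have a: "a > 0" "n - 2 * i = a - i" "n - 1 - i = a - 1"
    using assms unfolding a_def by auto
  have "(a - i) * (a choose i) = a * ((a - 1) choose i)"
    by (rule binomial_absorb_comp)
  then show ?thesis
    unfolding rd3_coeff_def a_def[symmetric] a using a(1) by simp
qed

lemma poly_rev_dickson3_one:
  assumes "n \<ge> 1"
  shows "poly (rev_dickson3 n (1::'a::comm_ring_1)) x = diag_binomial_sum (n - 1) x"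
proof -
  have "poly (rev_dickson3 n (1::'a)) x = (\<Sum>i\<le>n div 2. of_nat ((n - 1 - i) choose i) * (-x) ^ i)"
    using assms unfolding rev_dickson3_def by (simp add: poly_sum rd3_coeff_eq_choose)
  also have "\<dots> = diag_binomial_sum (n - 1) x"
    unfolding diag_binomial_sum_def
  proof (rule sum.mono_neutral_left)
    show "\<forall>i\<in>{..n - 1} - {..n div 2}. of_nat ((n - 1 - i) choose i) * (- x) ^ i = (0::'a)"
    proof
      fix i assume "i \<in> {..n - 1} - {..n div 2}"
      then have "n - 1 - i < i" by auto
      then show "of_nat ((n - 1 - i) choose i) * (- x) ^ i = (0::'a)" by (simp add: binomial_eq_0)
    qed
    show "{..n div 2} \<subseteq> {..n - 1}" using assms by auto
  qed auto
  finally show ?thesis .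
qed

text \<open>\<open>pow_one_plus_sqrt k w = (a, b)\<close> encodes \<open>(1 + \<surd>w)\<^sup>k = a + b \<surd>w\<close>.\<close>

fun pow_one_plus_sqrt :: "nat \<Rightarrow> 'a::comm_ring_1 \<Rightarrow> 'a \<times> 'a" where
  "pow_one_plus_sqrt 0 w = (1, 0)"
| "pow_one_plus_sqrt (Suc k) w =
     (fst (pow_one_plus_sqrt k w) + w * snd (pow_one_plus_sqrt k w),
      fst (pow_one_plus_sqrt k w) + snd (pow_one_plus_sqrt k w))"

lemma pow_one_plus_sqrt_Suc_Suc:
  "pow_one_plus_sqrt (Suc (Suc k)) w = (case pow_one_plus_sqrt k w of (a, b) \<Rightarrow>
     ((1 + w) * a + 2 * w * b, 2 * a + (1 + w) * b))"
  by (simp add: split_beta algebra_simps)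

lemma snd_pow_one_plus_sqrt_Suc_Suc:
  "snd (pow_one_plus_sqrt (Suc (Suc k)) w)
     = 2 * snd (pow_one_plus_sqrt (Suc k) w) - (1 - w) * snd (pow_one_plus_sqrt k w)"
  by (simp add: algebra_simps)

lemma two_pow_mult_diag_binomial_sum:
  "2 ^ k * diag_binomial_sum k x = snd (pow_one_plus_sqrt (Suc k) (1 - 4 * x))"
proof (induction k rule: induct_nat_012)
  case 0
  then show ?case by (simp add: diag_binomial_sum_def)
next
  case 1
  then show ?case by (simp add: diag_binomial_sum_def)
next
  case (ge2 k)
  have "2 ^ Suc (Suc k) * diag_binomial_sum (Suc (Suc k)) x
      = 2 * (2 ^ Suc k * diag_binomial_sum (Suc k) x) - (4 * x) * (2 ^ k * diag_binomial_sum k x)"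
    by (simp add: diag_binomial_sum_Suc_Suc algebra_simps)
  then show ?case
    using ge2.IH by (simp only: snd_pow_one_plus_sqrt_Suc_Suc[of "Suc k"]) simp
qed

lemma two_pow_mult_poly_rev_dickson3_one:
  assumes "n \<noteq> 0"
  shows "2 ^ (n - 1) * poly (rev_dickson3 n (1::'a::comm_ring_1)) x
    = snd (pow_one_plus_sqrt n (1 - 4 * x))"
  using assms two_pow_mult_diag_binomial_sum[of "n - 1" x]
  by (simp add: poly_rev_dickson3_one)

lemma snd_pow_one_plus_sqrt_zero: "snd (pow_one_plus_sqrt k 0) = of_nat k"
proof -
  have "pow_one_plus_sqrt k (0::'a) = (1, of_nat k)"
    by (induction k) auto
  then show ?thesis by simp
qed

lemma snd_pow_one_plus_sqrt_one: "snd (pow_one_plus_sqrt (Suc k) 1) = 2 ^ k"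
proof -
  have "pow_one_plus_sqrt (Suc k) (1::'a) = (2 ^ k, 2 ^ k)"
    by (induction k) auto
  then show ?thesis by simp
qed

lemma snd_pow_one_plus_sqrt_minus_one:
  "snd (pow_one_plus_sqrt (4 * j + 2) (-1)) = 2 * (-4) ^ j"
proof (induction j)
  case 0
  then show ?case by (simp add: numeral_eq_Suc)
next
  case (Suc j)
  have "4 * Suc j + 2 = Suc (Suc (Suc (Suc (4 * j + 2))))" by simp
  then show ?case
    using Suc.IH by (simp only: pow_one_plus_sqrt_Suc_Suc split_beta) (simp add: algebra_simps)
qed

lemma pow_one_plus_sqrt_inverse:
  fixes w :: "'a::field"
  assumes "w \<noteq> 0"
  shows "w ^ l * fst (pow_one_plus_sqrt (2 * l) (inverse w)) = fst (pow_one_plus_sqrt (2 * l) w) \<and>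
         w ^ l * snd (pow_one_plus_sqrt (2 * l) (inverse w)) = w * snd (pow_one_plus_sqrt (2 * l) w)"
proof (induction l)
  case 0
  then show ?case by simp
next
  case (Suc l)
  obtain a b where ab: "pow_one_plus_sqrt (2 * l) w = (a, b)" by fastforce
  obtain a' b' where ab': "pow_one_plus_sqrt (2 * l) (inverse w) = (a', b')" by fastforce
  have "w ^ l * a' = a" "w ^ l * b' = w * b"
    using Suc.IH by (simp_all add: ab ab')
  then have "a' = a / w ^ l" "b' = w * b / w ^ l"
    using assms by (simp_all add: field_simps)
  moreover have "2 * Suc l = Suc (Suc (2 * l))" by simp
  ultimately show ?case
    using assms by (simp only: pow_one_plus_sqrt_Suc_Suc ab ab' prod.case) (simp add: field_simps)
qed

lemma snd_pow_one_plus_sqrt_inverse: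
  fixes w :: "'a::field"
  assumes "w \<noteq> 0"
  shows "w ^ m * snd (pow_one_plus_sqrt (2 * m) (inverse w)) = w * snd (pow_one_plus_sqrt (2 * m) w)"
  using pow_one_plus_sqrt_inverse[OF assms] by blast

lemma finite_field_power_card_minus_one:
  fixes x :: "'a::{field,finite}"
  assumes "x \<noteq> 0"
  shows "x ^ (card (UNIV :: 'a set) - 1) = 1"
proof -
  have "x * (\<Prod>y\<in>UNIV-{0}. x * y) = x * x ^ (card (UNIV :: 'a set) - 1) * \<Prod>(UNIV-{0})"
    by (simp add: prod.distrib mult_ac)
  moreover have "(\<Prod>y\<in>UNIV-{0}. x * y) = (\<Prod>y\<in>UNIV-{0}. y)"
    by (rule prod.reindex_bij_witness[of _ "\<lambda>y. y / x" "\<lambda>y. x * y"]) (use assms in auto)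
  moreover have "\<Prod>(UNIV-{0::'a}) \<noteq> 0"
    by (simp add: prod_zero_iff)
  ultimately show ?thesis using assms by simp
qed

text \<open>
  If \<open>1\<close> were the only \<open>d\<close>-th root of unity, every unit \<open>w \<noteq> 1\<close> would be a root of
  \<open>(X\<^sup>q\<^sup>-\<^sup>1 - 1)/(X\<^sup>d - 1)\<close>, which has degree only \<open>q - 1 - d\<close>.
\<close>

lemma exists_root_of_unity_neq_one:
  assumes "d \<ge> 2" "d dvd card (UNIV :: 'a::{field,finite} set) - 1"
  shows "\<exists>w::'a. w ^ d = 1 \<and> w \<noteq> 1"
proof (rule ccontr)
  assume no_root: "\<not> ?thesis"
  define q where "q = card (UNIV :: 'a set)"
  have "card {0::'a, 1} \<le> q"
    unfolding q_def by (rule card_mono) auto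
  then have q2: "q \<ge> 2" by simp
  obtain k where k: "q - 1 = d * k"
    using assms(2) unfolding q_def by (auto elim: dvdE)
  have k1: "k \<ge> 1" using k q2 by (cases k) auto
  define h :: "'a poly" where "h = (\<Sum>j<k. monom 1 (d * j))"
  have poly_h: "poly h w = (\<Sum>j<k. (w ^ d) ^ j)" for w
    unfolding h_def by (simp add: poly_sum poly_monom power_mult)
  have "poly h 0 = (\<Sum>j<k. if j = 0 then 1 else (0::'a))"
    unfolding poly_h using assms(1) by (intro sum.cong) (auto simp: power_0_left)
  then have "poly h 0 = 1" using k1 by simp
  then have "h \<noteq> 0" by auto
  have degree_h: "degree h \<le> d * (k - 1)"
    unfolding h_def
  proof (rule degree_sum_le)
    fix j assume "j \<in> {..<k}"
    then have "d * j \<le> d * (k - 1)" by (intro mult_le_mono2) auto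
    then show "degree (monom (1::'a) (d * j)) \<le> d * (k - 1)"
      using degree_monom_le[of "1::'a" "d * j"] by linarith
  qed simp
  have "UNIV - {0, 1} \<subseteq> {w::'a. poly h w = 0}"
  proof
    fix w :: 'a assume w: "w \<in> UNIV - {0, 1}"
    have "(w ^ d - 1) * poly h w = w ^ (q - 1) - 1"
      unfolding poly_h k by (simp add: power_diff_1_eq power_mult)
    also have "\<dots> = 0"
      using finite_field_power_card_minus_one[of w] w unfolding q_def by simp
    finally show "w \<in> {w. poly h w = 0}" using no_root w by auto
  qed
  then have "card (UNIV - {0::'a, 1}) \<le> card {w::'a. poly h w = 0}"
    by (intro card_mono) simp_all
  also have "\<dots> \<le> degree h"
    by (rule card_poly_roots_bound[OF \<open>h \<noteq> 0\<close>])
  finally have "q - 2 \<le> d * k - d"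
    using degree_h unfolding q_def by (simp add: card_Diff_subset diff_mult_distrib2)
  moreover have "d \<le> d * k" using k1 by simp
  ultimately show False using k assms(1) q2 by linarith
qed

lemma inj_snd_pow_one_plus_sqrt_if_permutation_poly:
  fixes n :: nat
  assumes "(2::'a::{field,finite}) \<noteq> 0" "n \<noteq> 0"
    and "permutation_poly (rev_dickson3 n (1::'a))"
  shows "inj (\<lambda>w::'a. snd (pow_one_plus_sqrt n w))"
proof (rule injI)
  fix w v :: 'a
  assume eq: "snd (pow_one_plus_sqrt n w) = snd (pow_one_plus_sqrt n v)"
  have four: "(4::'a) \<noteq> 0"
    using assms(1) mult_eq_0_iff[of "2::'a" 2] by simp
  let ?F = "poly (rev_dickson3 n (1::'a))"
  have "1 - 4 * ((1 - u) / 4) = u" for u :: 'a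
    using four by (simp add: field_simps)
  then have "2 ^ (n - 1) * ?F ((1 - w) / 4) = 2 ^ (n - 1) * ?F ((1 - v) / 4)"
    using eq by (simp only: two_pow_mult_poly_rev_dickson3_one[OF assms(2)])
  then have "?F ((1 - w) / 4) = ?F ((1 - v) / 4)"
    using assms(1) by simp
  moreover have "inj ?F"
    using assms(3) unfolding permutation_poly_def by (rule bij_is_inj)
  ultimately have "(1 - w) / 4 = (1 - v) / 4"
    by (blast dest: injD)
  then show "w = v" using four by (simp add: field_simps)
qed

lemma eq_one_or_minus_one_if_inj_inverse_eq:
  fixes f :: "'a::field \<Rightarrow> 'b"
  assumes "inj f" "w \<noteq> 0" "f (inverse w) = f w"
  shows "w = 1 \<or> w = -1"
proof -
  have "inverse w = w" using injD[OF assms(1,3)] .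
  then have "w * w = 1" using assms(2) by (metis right_inverse)
  then show ?thesis by (simp add: square_eq_1_iff)
qed

lemma four_dvd_if_permutation_poly_rev_dickson3:
  fixes n :: nat
  assumes "(2::'a::{field,finite}) \<noteq> 0" "of_nat n \<noteq> (0::'a)" "even n"
    and perm: "permutation_poly (rev_dickson3 n (1::'a))"
  shows "4 dvd n"
proof -
  obtain m where n: "n = 2 * m" using assms(3) by (auto elim: evenE)
  define B where "B w = snd (pow_one_plus_sqrt n w)" for w :: 'a
  have "n \<noteq> 0" using assms(2) by (rule contrapos_nn) simp
  have inj: "inj B"
    unfolding B_def using inj_snd_pow_one_plus_sqrt_if_permutation_poly[OF assms(1) \<open>n \<noteq> 0\<close> perm] .
  obtain x where "poly (rev_dickson3 n (1::'a)) x = 0"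
    using perm unfolding permutation_poly_def by (metis bij_pointE)
  define w where "w = 1 - 4 * x"
  have root: "B w = 0"
    using \<open>poly _ x = 0\<close> unfolding B_def w_def
    by (simp flip: two_pow_mult_poly_rev_dickson3_one[OF \<open>n \<noteq> 0\<close>])
  moreover have "B 0 \<noteq> 0"
    using assms(2) unfolding B_def by (simp add: snd_pow_one_plus_sqrt_zero)
  ultimately have "w \<noteq> 0" by auto
  have "w ^ m * B (inverse w) = 0"
    using snd_pow_one_plus_sqrt_inverse[OF \<open>w \<noteq> 0\<close>, of m] root unfolding B_def n by simp
  then have "B (inverse w) = B w"
    using \<open>w \<noteq> 0\<close> root by simp
  then have "w = 1 \<or> w = -1"
    using eq_one_or_minus_one_if_inj_inverse_eq[OF inj \<open>w \<noteq> 0\<close>] by blast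
  moreover have "B 1 \<noteq> 0"
    using \<open>n \<noteq> 0\<close> assms(1) snd_pow_one_plus_sqrt_one[of "n - 1", where 'a='a]
    unfolding B_def by simp
  ultimately have "B (-1) = 0" using root by auto
  show "4 dvd n"
  proof (rule ccontr)
    assume "\<not> 4 dvd n"
    then have "n = 4 * (n div 4) + 2" using n by presburger
    then have "B (-1) = 2 * (-4) ^ (n div 4)"
      unfolding B_def by (metis snd_pow_one_plus_sqrt_minus_one)
    moreover have "(4::'a) \<noteq> 0"
      using assms(1) mult_eq_0_iff[of "2::'a" 2] by simp
    ultimately show False using \<open>B (-1) = 0\<close> assms(1) by simp
  qed
qed

lemma coprime_if_permutation_poly_rev_dickson3:
  fixes n :: nat
  assumes "(2::'a::{field,finite}) \<noteq> 0" "n \<noteq> 0" "4 dvd n"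
    and perm: "permutation_poly (rev_dickson3 n (1::'a))"
  shows "coprime ((n - 1) div 2) (card (UNIV :: 'a set) - 1)"
proof (rule ccontr)
  assume not_coprime: "\<not> ?thesis"
  define m where "m = n div 2"
  have n: "n = 2 * m" and "m \<ge> 1" and odd_m1: "odd (m - 1)"
    using assms(2,3) unfolding m_def by (auto elim!: dvdE)
  have "(n - 1) div 2 = m - 1" using n \<open>m \<ge> 1\<close> by simp
  define d where "d = gcd (m - 1) (card (UNIV :: 'a set) - 1)"
  have "d \<noteq> 1"
    using not_coprime unfolding d_def \<open>(n - 1) div 2 = m - 1\<close> by (simp add: coprime_iff_gcd_eq_1)
  moreover have "d \<noteq> 0"
    using odd_m1 unfolding d_def by auto
  ultimately have "d \<ge> 2" by simp
  then obtain w :: 'a where w: "w ^ d = 1" "w \<noteq> 1"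
    using exists_root_of_unity_neq_one unfolding d_def by fastforce
  have "d dvd m - 1" unfolding d_def by simp
  then have "odd d" using odd_m1 by (auto dest: dvd_trans)
  have "w \<noteq> 0" using w \<open>d \<noteq> 0\<close> by (auto simp: power_0_left)
  have "w ^ (m - 1) = 1"
    using \<open>d dvd m - 1\<close> w(1) by (auto elim!: dvdE simp: power_mult)
  then have "w ^ m = w"
    using \<open>m \<ge> 1\<close> by (cases m) auto
  then have "snd (pow_one_plus_sqrt n (inverse w)) = snd (pow_one_plus_sqrt n w)"
    using snd_pow_one_plus_sqrt_inverse[OF \<open>w \<noteq> 0\<close>, of m] \<open>w \<noteq> 0\<close> unfolding n by simp
  then have "w = -1"
    using eq_one_or_minus_one_if_inj_inverse_eq[OF
        inj_snd_pow_one_plus_sqrt_if_permutation_poly[OF assms(1,2) perm] \<open>w \<noteq> 0\<close>] w(2)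
    by blast
  then have "(-1::'a) = 1"
    using w(1) \<open>odd d\<close> by simp
  then show False
    using assms(1) by (metis add.right_inverse one_add_one)
qed

theorem theorem3p3:
  fixes p q n :: nat
  assumes "prime p" and "odd p"
    and "CHAR('a::{field,finite}) = p"
    and "card (UNIV :: 'a set) = q"
    and "even n" and "\<not> p dvd n"
    and "permutation_poly (rev_dickson3 n (1::'a))"
  shows "n mod 4 = 0 \<and> gcd ((n - 1) div 2) (q - 1) = 1"
proof -
  have "p \<noteq> 2" using assms(2) by auto
  then have "\<not> p dvd 2"
    using assms(1) primes_dvd_imp_eq two_is_prime_nat by blast
  then have two: "(2::'a) \<noteq> 0"
    using of_nat_eq_0_iff_char_dvd[where 'a='a, of 2] assms(3) by simp
  have "of_nat n \<noteq> (0::'a)"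
    using of_nat_eq_0_iff_char_dvd[where 'a='a, of n] assms(3,6) by simp
  then have "n \<noteq> 0"
    by (rule contrapos_nn) simp
  have "4 dvd n"
    using four_dvd_if_permutation_poly_rev_dickson3[OF two \<open>of_nat n \<noteq> 0\<close> assms(5,7)] .
  have "coprime ((n - 1) div 2) (q - 1)"
    using coprime_if_permutation_poly_rev_dickson3[OF two \<open>n \<noteq> 0\<close> \<open>4 dvd n\<close> assms(7)] assms(4) by simp
  then show ?thesis
    using \<open>4 dvd n\<close> by (simp add: coprime_iff_gcd_eq_1)
qed

end
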